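(* Let $\nu,k$ be integers with $2\nu-1\ge k\ge\nu-1\ge1$. Then $x=0$ is a zero of the polynomial $D(2\nu,k,x)$ of multiplicity exactly $N(2\nu,k)$.
   Context: For $n>k\ge1$ and $x\in\mathbb{R}$, $A(n,k,x)$ is the $n\times n$ skew-symmetric Toeplitz matrix whose first $k$ superdiagonals have all entries $1$ and whose remaining superdiagonal entries are all $-x$; $D(n,k,x)\in\mathbb{Z}[x]$ is its determinant. $N(n,k)$ is the nullity of $A(n,k,0)$. *)

theory Defs
  imports "Jordan_Normal_Form.Matrix_Kernel" "Jordan_Normal_Form.Determinant"
    "HOL-Computational_Algebra.Polynomial"
begin

definition skewA :: "nat \<Rightarrow> nat \<Rightarrow> 'a::comm_ring_1 \<Rightarrow> 'a mat" where
  "skewA n k x = mat n n (\<lambda>(i,j).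
     if i < j then (if j - i \<le> k then 1 else - x)
     else if j < i then (if i - j \<le> k then - 1 else x)
     else 0)"

definition D :: "nat \<Rightarrow> nat \<Rightarrow> int poly" where
  "D n k = det (skewA n k [:0, 1:])"

definition N :: "nat \<Rightarrow> nat \<Rightarrow> nat" where
  "N n k = kernel_dim (skewA n k (0::rat))"

end

theory Submission
  imports Defs
begin

text \<open>
  Subtracting consecutive rows of \<open>A(n,k,0)\<close> turns the equation \<open>A(n,k,0) f = 0\<close> into the
  recurrence \<open>f i + f (i+1) = f (i+k+1) + f (i-k)\<close> (entries outside \<open>[0,n)\<close> read as \<open>0\<close>)
  plus one boundary row. With \<open>m = n - 1 - k\<close>, a solution is determined by \<open>f 0\<close> and \<open>f 1\<close>:
  it is a 3-periodic sequence \<open>\<alpha>\<close> on \<open>[0,m)\<close>, alternates on \<open>[m,k]\<close>, and beyond \<open>k\<close> follows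
  the consecutive sums \<open>\<beta>\<close> of \<open>\<alpha>\<close>. For \<open>n = 2\<nu>\<close> the boundary conditions force \<open>f = 0\<close>
  unless \<open>m mod 3 = 1\<close>; then \<open>D(n,k,0) = det A(n,k,0) \<noteq> 0\<close>, and multiplicity and nullity
  are both \<open>0\<close>.

  For \<open>m mod 3 = 1\<close> let \<open>P\<close> be the identity with its last two columns replaced by two null
  vectors. Then \<open>det P = 1\<close> and \<open>A(n,k,x) P = M(x) diag(1,...,1,x,x)\<close>, so
  \<open>D(n,k) = det M(x) x\<^sup>2\<close>. \<open>M(0)\<close> is nonsingular because the coefficient of \<open>x\<close> in \<open>A(n,k,x)\<close>
  pairs the two null vectors nontrivially, and the congruence
  \<open>P\<^sup>T A(n,k,0) P = A(n-2,k,0) \<oplus> 0\<close> with \<open>A(n-2,k,0)\<close> nonsingular shows that the nullity is \<open>2\<close>.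
\<close>

section \<open>Kernels and determinants\<close>

lemma kernel_dim_zero_mat: "kernel.dim n (0\<^sub>m n n :: 'a::field mat) = n"
proof -
  interpret vec_space "TYPE('a)" n .
  have "mat_kernel (0\<^sub>m n n :: 'a mat) = carrier_vec n"
    by (auto simp: mat_kernel_def)
  moreover have "(module_vec TYPE('a) n)\<lparr>carrier := carrier_vec n\<rparr> = module_vec TYPE('a) n"
    by (simp add: module_vec_def)
  ultimately show ?thesis using dim_is_n by (simp only:)
qed

lemma kernel_dim_eq_0_if_det_nonzero:
  fixes A :: "'a::field mat"
  assumes A: "A \<in> carrier_mat n n" and det: "det A \<noteq> 0"
  shows "kernel.dim n A = 0"
proof -
  from det_non_zero_imp_unit[OF A det, unfolded Units_def, of "()"]
  obtain B where B: "B \<in> carrier_mat n n" and BA: "B * A = 1\<^sub>m n" and AB: "A * B = 1\<^sub>m n"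
    by (auto simp: ring_mat_def)
  have "mat_kernel A = mat_kernel (1\<^sub>m n)"
    using mat_kernel_mult_eq[OF A B A AB] BA by simp
  then show ?thesis using kernel_one_mat by simp
qed

lemma kernel_dim_congruence:
  fixes A P :: "'a::field mat"
  assumes A: "A \<in> carrier_mat n n" and P: "P \<in> carrier_mat n n" and det: "det P \<noteq> 0"
  shows "kernel.dim n (transpose_mat P * (A * P)) = kernel.dim n A"
proof -
  from det_non_zero_imp_unit[OF P det, unfolded Units_def, of "()"]
  obtain B where B: "B \<in> carrier_mat n n" and PB: "P * B = 1\<^sub>m n"
    by (auto simp: ring_mat_def)
  have "transpose_mat B * transpose_mat P = 1\<^sub>m n"
    using transpose_mult[OF P B] PB by simp
  then have "mat_kernel (transpose_mat P * (A * P)) = mat_kernel (A * P)"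
    by (intro mat_kernel_mult_eq) (use A P B in auto)
  then show ?thesis
    using mat_kernel_dim_mult_eq_right[OF A P B PB] by simp
qed

lemma det_nonzero_if_kernel_trivial:
  fixes A :: "'a::idom mat"
  assumes A: "A \<in> carrier_mat n n"
    and trivial: "\<And>v i. v \<in> carrier_vec n \<Longrightarrow> A *\<^sub>v v = 0\<^sub>v n \<Longrightarrow> i < n \<Longrightarrow> v $ i = 0"
  shows "det A \<noteq> 0"
proof
  assume "det A = 0"
  then obtain v where v: "v \<in> carrier_vec n" "v \<noteq> 0\<^sub>v n" "A *\<^sub>v v = 0\<^sub>v n"
    using det_0_iff_vec_prod_zero[OF A] by blast
  then have "v = 0\<^sub>v n" using trivial by (intro eq_vecI) auto
  with v(2) show False ..
qed

lemma det_upper_triangular_prod: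
  assumes "A \<in> carrier_mat n n" and "upper_triangular A"
  shows "det A = (\<Prod>i<n. A $$ (i, i))"
  using assms det_upper_triangular[of A n] prod_list_diag_prod[of A] by (simp add: atLeast0LessThan)

lemma sum_lessThan_last_two:
  assumes "2 \<le> (n::nat)"
  shows "(\<Sum>i<n. g i) = (\<Sum>i<n - 2. g i) + g (n - 2) + g (n - 1)"
proof -
  obtain n' where "n = Suc (Suc n')" using assms by (metis add_2_eq_Suc le_Suc_ex)
  then show ?thesis by simp
qed

lemma mult_mat_index_sum:
  assumes "A \<in> carrier_mat n n" "B \<in> carrier_mat n n" "i < n" "j < n"
  shows "(A * B) $$ (i, j) = (\<Sum>l<n. A $$ (i, l) * B $$ (l, j))"
  using assms by (simp add: scalar_prod_def lessThan_atLeast0)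

lemma sum_lessThan_delta_mult:
  "(\<Sum>l<(n::nat). f l * (if l = j then c else 0)) = (if j < n then f j * c else (0::'a::comm_ring_1))"
proof -
  have "(\<Sum>l<n. f l * (if l = j then c else 0)) = (\<Sum>l<n. if l = j then f j * c else 0)"
    by (rule sum.cong) auto
  then show ?thesis by simp
qed

interpretation poly_eval: comm_ring_hom "\<lambda>p. poly p a"
  by unfold_locales auto

lemma order_0_mult_X_power:
  fixes q :: "'a::idom poly"
  assumes "poly q 0 \<noteq> 0"
  shows "q * [:0, 1:] ^ d \<noteq> 0 \<and> order 0 (q * [:0, 1:] ^ d) = d"
proof -
  have "q \<noteq> 0" and "order 0 q = 0" using assms order_root by auto
  moreover have "order 0 ([:0, 1:] ^ d :: 'a poly) = d"
    using order_power_n_n[of "0::'a" d] by simp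
  ultimately show ?thesis by (simp add: order_mult)
qed

section \<open>The entries of \<open>A(n,k,x)\<close>\<close>

definition skew_entry :: "nat \<Rightarrow> 'a::comm_ring_1 \<Rightarrow> nat \<Rightarrow> nat \<Rightarrow> 'a" where
  "skew_entry k x i j = (if i < j then (if j - i \<le> k then 1 else - x)
     else if j < i then (if i - j \<le> k then - 1 else x) else 0)"

definition far_entry :: "nat \<Rightarrow> nat \<Rightarrow> nat \<Rightarrow> 'a::comm_ring_1" where
  "far_entry k i j = (if i + k < j then - 1 else 0) + (if j + k < i then 1 else 0)"

definition skew_apply :: "nat \<Rightarrow> nat \<Rightarrow> 'a::comm_ring_1 \<Rightarrow> (nat \<Rightarrow> 'a) \<Rightarrow> nat \<Rightarrow> 'a" where
  "skew_apply n k x f i = (\<Sum>j<n. skew_entry k x i j * f j)"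

definition far_apply :: "nat \<Rightarrow> nat \<Rightarrow> (nat \<Rightarrow> 'a::comm_ring_1) \<Rightarrow> nat \<Rightarrow> 'a" where
  "far_apply n k f i = (\<Sum>j<n. far_entry k i j * f j)"

lemma skewA_eq: "skewA n k x = mat n n (\<lambda>(i, j). skew_entry k x i j)"
  unfolding skewA_def skew_entry_def by simp

lemma skewA_carrier [simp]: "skewA n k x \<in> carrier_mat n n"
  unfolding skewA_eq by simp

lemma skewA_index [simp]: "i < n \<Longrightarrow> j < n \<Longrightarrow> skewA n k x $$ (i, j) = skew_entry k x i j"
  unfolding skewA_eq by simp

lemma skewA_mult_vec:
  assumes "v \<in> carrier_vec n" and "i < n"
  shows "(skewA n k x *\<^sub>v v) $ i = skew_apply n k x (($) v) i"
  using assms unfolding skew_apply_def skewA_eq by (simp add: scalar_prod_def lessThan_atLeast0)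

lemma skew_entry_split: "skew_entry k x i j = skew_entry k 0 i j + x * far_entry k i j"
  unfolding skew_entry_def far_entry_def by auto

lemma skew_apply_split: "skew_apply n k x f i = skew_apply n k 0 f i + x * far_apply n k f i"
  unfolding skew_apply_def far_apply_def
  by (subst skew_entry_split) (simp add: sum.distrib algebra_simps sum_distrib_left)

lemma skew_entry_antisym: "skew_entry k x i j = - skew_entry k x j i"
  unfolding skew_entry_def by auto

lemma far_entry_antisym: "far_entry k i j = - far_entry k j i"
  unfolding far_entry_def by auto

lemma bilinear_antisym:
  fixes E :: "nat \<Rightarrow> nat \<Rightarrow> 'a::comm_ring_1"
  assumes "\<And>i j. E i j = - E j i"
  shows "(\<Sum>i<n. u i * (\<Sum>j<n. E i j * w j)) = - (\<Sum>j<n. w j * (\<Sum>i<n. E j i * u i))"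
proof -
  have "(\<Sum>i<n. u i * (\<Sum>j<n. E i j * w j)) = (\<Sum>i<n. \<Sum>j<n. u i * E i j * w j)"
    by (simp add: sum_distrib_left mult.assoc)
  also have "\<dots> = (\<Sum>j<n. \<Sum>i<n. u i * E i j * w j)" by (rule sum.swap)
  also have "\<dots> = (\<Sum>j<n. \<Sum>i<n. - (w j * E j i * u i))"
    by (intro sum.cong refl) (subst assms, simp add: algebra_simps)
  also have "\<dots> = - (\<Sum>j<n. w j * (\<Sum>i<n. E j i * u i))"
    by (simp add: sum_distrib_left mult.assoc sum_negf)
  finally show ?thesis .
qed

lemma skew_apply_antisym:
  "(\<Sum>i<n. f i * skew_apply n k x g i) = - (\<Sum>j<n. g j * skew_apply n k x f j)"
  unfolding skew_apply_def by (rule bilinear_antisym) (rule skew_entry_antisym)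

lemma far_apply_antisym: "(\<Sum>i<n. f i * far_apply n k g i) = - (\<Sum>j<n. g j * far_apply n k f j)"
  unfolding far_apply_def by (rule bilinear_antisym) (rule far_entry_antisym)

lemma far_apply_self:
  fixes f :: "nat \<Rightarrow> 'a::{idom, ring_char_0}"
  shows "(\<Sum>i<n. f i * far_apply n k f i) = 0"
  using far_apply_antisym[of f n k f] by simp

lemma far_apply_eq:
  assumes "i < n"
  shows "far_apply n k f i = - (\<Sum>j\<in>{i + k + 1..<n}. f j) + (\<Sum>j<i - k. f j)"
proof -
  have "far_apply n k f i = (\<Sum>j<n. (if i + k < j then - f j else 0)) + (\<Sum>j<n. (if j + k < i then f j else 0))"
    unfolding far_apply_def far_entry_def sum.distrib[symmetric]
    by (intro sum.cong refl) (auto simp: algebra_simps)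
  also have "(\<Sum>j<n. (if i + k < j then - f j else 0)) = (\<Sum>j\<in>{..<n} \<inter> {j. i + k < j}. - f j)"
    by (simp add: sum.inter_restrict)
  also have "{..<n} \<inter> {j. i + k < j} = {i + k + 1..<n}" by auto
  also have "(\<Sum>j<n. (if j + k < i then f j else 0)) = (\<Sum>j\<in>{..<n} \<inter> {j. j + k < i}. f j)"
    by (simp add: sum.inter_restrict)
  also have "{..<n} \<inter> {j. j + k < i} = {..<i - k}" using assms by auto
  finally show ?thesis by (simp add: sum_negf)
qed

lemma (in comm_ring_hom) hom_skew_entry: "hom (skew_entry k x i j) = skew_entry k (hom x) i j"
  unfolding skew_entry_def by (simp add: hom_distribs)

lemma (in comm_ring_hom) hom_far_apply: "hom (far_apply n k f i) = far_apply n k (\<lambda>t. hom (f t)) i"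
  unfolding far_apply_def far_entry_def by (auto simp: hom_distribs intro!: sum.cong)

lemma (in comm_ring_hom) map_skewA: "map_mat hom (skewA n k x) = skewA n k (hom x)"
  unfolding skewA_eq by (rule eq_matI) (auto simp: hom_skew_entry)

lemma poly_D_0: "poly (D n k) 0 = det (skewA n k (0::int))"
  unfolding D_def poly_eval.hom_det[symmetric] poly_eval.map_skewA by simp

section \<open>Null vectors of \<open>A(n,k,0)\<close>\<close>

definition null_vec :: "nat \<Rightarrow> nat \<Rightarrow> (nat \<Rightarrow> 'a::comm_ring_1) \<Rightarrow> bool" where
  "null_vec n k f \<longleftrightarrow> (\<forall>i<n. skew_apply n k 0 f i = 0)"

lemma null_vec_mat_kernel:
  assumes "v \<in> carrier_vec n" and "skewA n k 0 *\<^sub>v v = 0\<^sub>v n"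
  shows "null_vec n k (($) v)"
  unfolding null_vec_def
proof (intro allI impI)
  fix i assume "i < n"
  then show "skew_apply n k 0 (($) v) i = 0"
    using assms skewA_mult_vec[OF assms(1) \<open>i < n\<close>, of k 0] by simp
qed

lemma skew_apply_null_vec:
  assumes "null_vec n k f" and "i < n"
  shows "skew_apply n k x f i = x * far_apply n k f i"
  using assms skew_apply_split[of n k x f i] unfolding null_vec_def by simp

lemma null_vec_pairing:
  assumes "null_vec n k f"
  shows "(\<Sum>i<n. f i * skew_apply n k 0 g i) = 0"
  using assms skew_apply_antisym[of f n k 0 g] unfolding null_vec_def by simp

lemma null_vec_col_sum:
  assumes "null_vec n k f" and "j < n"
  shows "(\<Sum>l<n. f l * skew_entry k 0 l j) = 0"
proof -
  have "(\<Sum>l<n. f l * skew_entry k 0 l j) = - skew_apply n k 0 f j"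
    unfolding skew_apply_def by (subst skew_entry_antisym) (simp add: sum_negf algebra_simps)
  then show ?thesis using assms unfolding null_vec_def by simp
qed

lemma skew_entry_Suc_diff:
  assumes "1 \<le> k"
  shows "skew_entry k x (Suc i) j - skew_entry k x i j =
    (if j = i then -1 else 0) + (if j = Suc i then -1 else 0)
    + (if j = i + 1 + k then 1 + x else 0) + (if j + k = i then 1 + x else 0)"
  using assms unfolding skew_entry_def by (auto simp: algebra_simps)

lemma skew_apply_Suc_diff:
  assumes k: "1 \<le> k" and i: "Suc i < n"
  shows "skew_apply n k x f (Suc i) - skew_apply n k x f i =
     - f i - f (Suc i) + (1 + x) * ((if i + 1 + k < n then f (i + 1 + k) else 0)
        + (if k \<le> i then f (i - k) else 0))"
proof -
  have "skew_apply n k x f (Suc i) - skew_apply n k x f i =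
      (\<Sum>j<n. (skew_entry k x (Suc i) j - skew_entry k x i j) * f j)"
    unfolding skew_apply_def by (simp add: sum_subtractf left_diff_distrib)
  also have "\<dots> = (\<Sum>j<n. f j * (if j = i then -1 else 0) + f j * (if j = Suc i then -1 else 0)
    + f j * (if j = i + 1 + k then 1 + x else 0) + f j * (if j = i - k then (if k \<le> i then 1 + x else 0) else 0))"
    by (intro sum.cong refl, subst skew_entry_Suc_diff[OF k]) (auto simp: algebra_simps)
  also have "\<dots> = - f i - f (Suc i) + (1 + x) * ((if i + 1 + k < n then f (i + 1 + k) else 0)
        + (if k \<le> i then f (i - k) else 0))"
    unfolding sum.distrib sum_lessThan_delta_mult using i by (auto simp: algebra_simps)
  finally show ?thesis .
qed

lemma skew_apply_0_row_0:
  assumes "k < n"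
  shows "skew_apply n k 0 f 0 = (\<Sum>j\<in>{1..k}. f j)"
proof -
  have "skew_apply n k 0 f 0 = (\<Sum>j<n. (if j \<in> {1..k} then f j else 0))"
    unfolding skew_apply_def skew_entry_def by (rule sum.cong) auto
  also have "\<dots> = (\<Sum>j\<in>{..<n} \<inter> {1..k}. f j)"
    by (simp add: sum.inter_restrict)
  also have "{..<n} \<inter> {1..k} = {1..k}" using assms by auto
  finally show ?thesis .
qed

lemma null_vec_iff:
  assumes k: "1 \<le> k" and kn: "k < n"
  shows "null_vec n k f \<longleftrightarrow> (\<Sum>j\<in>{1..k}. f j) = 0 \<and>
    (\<forall>i. Suc i < n \<longrightarrow> f i + f (Suc i) =
       (if i + 1 + k < n then f (i + 1 + k) else 0) + (if k \<le> i then f (i - k) else 0))"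
    (is "_ \<longleftrightarrow> ?row0 \<and> (\<forall>i. Suc i < n \<longrightarrow> ?diff i)")
proof
  assume K: "null_vec n k f"
  have "?diff i" if "Suc i < n" for i
  proof -
    have "skew_apply n k 0 f (Suc i) - skew_apply n k 0 f i = 0"
      using K that unfolding null_vec_def by auto
    then show ?thesis unfolding skew_apply_Suc_diff[OF k that] by (simp add: algebra_simps)
  qed
  moreover have ?row0 using K kn skew_apply_0_row_0[OF kn, of f] unfolding null_vec_def by simp
  ultimately show "?row0 \<and> (\<forall>i. Suc i < n \<longrightarrow> ?diff i)" by blast
next
  assume R: "?row0 \<and> (\<forall>i. Suc i < n \<longrightarrow> ?diff i)"
  have "skew_apply n k 0 f i = 0" if "i < n" for i
    using that
  proof (induction i)
    case 0
    then show ?case using R by (simp add: skew_apply_0_row_0[OF kn])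
  next
    case (Suc i)
    then have "skew_apply n k 0 f (Suc i) - skew_apply n k 0 f i = 0"
      using R unfolding skew_apply_Suc_diff[OF k Suc(2)] by (simp add: algebra_simps)
    then show ?case using Suc by simp
  qed
  then show "null_vec n k f" unfolding null_vec_def by blast
qed

definition alpha_seq :: "'a::comm_ring_1 \<Rightarrow> 'a \<Rightarrow> nat \<Rightarrow> 'a" where
  "alpha_seq p q t = (if t mod 3 = 0 then p else if t mod 3 = 1 then q else - p - q)"

definition beta_seq :: "'a::comm_ring_1 \<Rightarrow> 'a \<Rightarrow> nat \<Rightarrow> 'a" where
  "beta_seq p q t = (if t mod 3 = 0 then - q else if t mod 3 = 1 then p + q else - p)"

lemma mod_3_cases: "t mod 3 = 0 \<or> t mod 3 = 1 \<or> t mod 3 = (2::nat)"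
  by arith

lemma alpha_seq_rec: "alpha_seq p q (Suc (Suc t)) = - alpha_seq p q (Suc t) - alpha_seq p q t"
  using mod_3_cases[of t] by (auto simp: alpha_seq_def mod_Suc algebra_simps)

lemma alpha_seq_add_Suc: "alpha_seq p q t + alpha_seq p q (Suc t) = beta_seq p q (Suc t)"
  using mod_3_cases[of t] by (auto simp: alpha_seq_def beta_seq_def mod_Suc algebra_simps)

lemma beta_seq_add_Suc: "beta_seq p q t + beta_seq p q (Suc t) = alpha_seq p q t"
  using mod_3_cases[of t] by (auto simp: alpha_seq_def beta_seq_def mod_Suc algebra_simps)

lemma alpha_seq_0_0 [simp]: "alpha_seq 0 0 t = 0"
  and beta_seq_0_0 [simp]: "beta_seq 0 0 t = 0"
  by (auto simp: alpha_seq_def beta_seq_def)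

lemma (in comm_ring_hom) hom_alpha_seq: "hom (alpha_seq p q t) = alpha_seq (hom p) (hom q) t"
  and hom_beta_seq: "hom (beta_seq p q t) = beta_seq (hom p) (hom q) t"
  unfolding alpha_seq_def beta_seq_def by (simp_all add: hom_distribs)

lemma sum_alpha_seq:
  "(\<Sum>j\<in>{1..t}. alpha_seq p q j) = (if t mod 3 = 0 then 0 else if t mod 3 = 1 then q else - p)"
proof (induction t)
  case 0
  then show ?case by simp
next
  case (Suc t)
  then show ?case using mod_3_cases[of t] by (auto simp: alpha_seq_def mod_Suc algebra_simps)
qed

lemma sum_alternating: "(\<Sum>j\<in>{a..<a + 2 * r}. (-1) ^ (j - a) * (q::'a::comm_ring_1)) = 0"
proof (induction r)
  case 0
  then show ?case by simp
next
  case (Suc r)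
  have "{a..<a + 2 * Suc r} = {a..<a + 2 * r} \<union> {a + 2 * r, Suc (a + 2 * r)}" by auto
  moreover have "(-1) ^ (Suc (a + 2 * r) - a) * q + (-1) ^ (a + 2 * r - a) * q = 0"
    by (simp add: Suc_diff_le)
  ultimately show ?case using Suc by (simp add: algebra_simps)
qed

lemma mod_3_pred:
  assumes "1 \<le> (m::nat)"
  shows "(m mod 3 = 1 \<longleftrightarrow> (m - 1) mod 3 = 0) \<and> (m mod 3 = 2 \<longleftrightarrow> (m - 1) mod 3 = 1)
     \<and> (m mod 3 = 0 \<longleftrightarrow> (m - 1) mod 3 = 2)"
proof -
  obtain m' where m': "m = Suc m'" using assms by (cases m) auto
  show ?thesis unfolding m' using mod_3_cases[of m'] by (auto simp: mod_Suc)
qed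

lemma beta_seq_1_0_diff:
  "beta_seq 1 0 s = of_bool (Suc s mod 3 = 2) - (of_bool (s mod 3 = 2) :: 'a::comm_ring_1)"
  using mod_3_cases[of s] by (auto simp: beta_seq_def mod_Suc)

lemma alpha_seq_1_0_diff:
  "alpha_seq 1 0 s = of_bool (Suc s mod 3 \<noteq> 0) - (of_bool (s mod 3 \<noteq> 0) :: 'a::comm_ring_1)"
  using mod_3_cases[of s] by (auto simp: alpha_seq_def mod_Suc)

text \<open>For \<open>m \<ge> 1\<close>, every null vector \<open>f\<close> of \<open>A(n,k,0)\<close> equals \<open>null_sol m k (f 0) (f 1)\<close> (see
  \<open>null_vec_head\<close>, \<open>null_vec_middle\<close>, \<open>null_vec_tail\<close> below); for \<open>m mod 3 = 1\<close> all of
  these are null vectors.\<close>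

definition null_sol :: "nat \<Rightarrow> nat \<Rightarrow> 'a::comm_ring_1 \<Rightarrow> 'a \<Rightarrow> nat \<Rightarrow> 'a" where
  "null_sol m k p q t =
    (if t < m then alpha_seq p q t else if t \<le> k then (-1) ^ (t - m) * q else beta_seq p q (t - k))"

lemma (in comm_ring_hom) hom_null_sol: "hom (null_sol m k p q t) = null_sol m k (hom p) (hom q) t"
  unfolding null_sol_def by (simp add: hom_distribs hom_alpha_seq hom_beta_seq)

text \<open>\<open>m = n - 1 - k\<close> is the number of superdiagonals of \<open>A(n,k,x)\<close> that carry \<open>-x\<close>.\<close>

locale toeplitz_dims =
  fixes n k m :: nat
  assumes n_eq: "n = k + 1 + m" and k_pos: "1 \<le> k" and m_le: "m \<le> k + 1"
    and odd_k_plus_m: "odd (k + m)"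
begin

lemma odd_k_minus_m: "m \<le> k \<Longrightarrow> odd (k - m)"
  using odd_k_plus_m by (metis add.commute le_add_diff_inverse odd_add)

lemma k_less_n: "k < n"
  using n_eq by simp

lemma null_vec_diff:
  assumes "null_vec n k f" and "Suc i < n"
  shows "f i + f (Suc i) =
    (if i + 1 + k < n then f (i + 1 + k) else 0) + (if k \<le> i then f (i - k) else 0)"
  using assms unfolding null_vec_iff[OF k_pos k_less_n] by blast

lemma null_vec_sum: "null_vec n k f \<Longrightarrow> (\<Sum>j\<in>{1..k}. f j) = 0"
  unfolding null_vec_iff[OF k_pos k_less_n] by blast

lemma null_vec_rec:
  assumes K: "null_vec n k f" and s: "1 \<le> s" "s < m" "s < k"
  shows "f (Suc s) = - f s - f (s - 1)"
proof -
  have b: "f s + f (Suc s) = f (k + Suc s)"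
    using null_vec_diff[OF K, of s] s n_eq by (simp add: add_ac)
  have c: "f (k + s) + f (k + Suc s) = f s"
    using null_vec_diff[OF K, of "k + s"] s n_eq m_le by (simp add: add_ac)
  have a: "f (k + s) = f (s - 1) + f s"
    using null_vec_diff[OF K, of "s - 1"] s n_eq by (simp add: add_ac)
  from b have "f (Suc s) = f (k + Suc s) - f s" by (simp add: algebra_simps)
  also from c have "f (k + Suc s) = f s - f (k + s)" by (simp add: algebra_simps)
  also note a
  also have "f s - (f (s - 1) + f s) - f s = - f s - f (s - 1)" by (simp add: algebra_simps)
  finally show ?thesis .
qed

lemma null_vec_far_eq:
  assumes K: "null_vec n k f" and s: "1 \<le> s" "s \<le> m" "s \<le> k"
  shows "f (k + s) = f (s - 1) + f s"
  using null_vec_diff[OF K, of "s - 1"] s n_eq by (simp add: add_ac)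

lemma null_vec_alternates:
  assumes K: "null_vec n k f" and i: "m \<le> i" "i < k"
  shows "f (Suc i) = - f i"
  using null_vec_diff[OF K, of i] i n_eq by (simp add: add_ac eq_neg_iff_add_eq_0)

lemma null_vec_head:
  assumes K: "null_vec n k f" and t: "t < m \<or> (t = m \<and> m \<le> k)"
  shows "f t = alpha_seq (f 0) (f 1) t"
  using t
proof (induction t rule: less_induct)
  case (less t)
  show ?case
  proof (cases "t < 2")
    case True
    then consider "t = 0" | "t = 1" by linarith
    then show ?thesis by cases (simp_all add: alpha_seq_def)
  next
    case False
    define s where "s = t - 2"
    then have t: "t = Suc (Suc s)" using False by simp
    have s: "Suc s < m" "Suc s < k" using less.prems t m_le by auto
    have "f t = - f (Suc s) - f s"
      using null_vec_rec[OF K, of "Suc s"] s t by simp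
    also have "\<dots> = alpha_seq (f 0) (f 1) t"
      using less.IH[of "Suc s"] less.IH[of s] s t by (simp add: alpha_seq_rec)
    finally show ?thesis .
  qed
qed

lemma null_vec_tail:
  assumes K: "null_vec n k f" and s: "1 \<le> s" "s \<le> m" "s \<le> k" "s < m \<or> m \<le> k"
  shows "f (k + s) = beta_seq (f 0) (f 1) s"
proof -
  have "f (k + s) = f (s - 1) + f s" by (rule null_vec_far_eq[OF K s(1-3)])
  also have "\<dots> = alpha_seq (f 0) (f 1) (s - 1) + alpha_seq (f 0) (f 1) s"
  proof -
    have "f (s - 1) = alpha_seq (f 0) (f 1) (s - 1)" by (rule null_vec_head[OF K]) (use s in arith)
    moreover have "f s = alpha_seq (f 0) (f 1) s" by (rule null_vec_head[OF K]) (use s in arith)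
    ultimately show ?thesis by (simp only:)
  qed
  also have "\<dots> = beta_seq (f 0) (f 1) s"
    using alpha_seq_add_Suc[of "f 0" "f 1" "s - 1"] s by simp
  finally show ?thesis .
qed

lemma null_vec_k:
  assumes K: "null_vec n k f" and m: "1 \<le> m" "m \<le> k"
  shows "f k = - f 1"
proof -
  have "f k + f (Suc k) = f 0"
    using null_vec_diff[OF K, of k] n_eq m by simp
  moreover have "f (Suc k) = f 0 + f 1"
    using null_vec_tail[OF K, of 1] m k_pos by (simp add: beta_seq_def)
  ultimately show ?thesis by (simp add: algebra_simps eq_neg_iff_add_eq_0)
qed

lemma null_vec_middle:
  assumes K: "null_vec n k f" and m: "1 \<le> m" "m \<le> k" and t: "m \<le> t" "t \<le> k"
  shows "f t = (-1) ^ (t - m) * f 1"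
proof -
  have "f (k - d) = (-1) ^ (k - d - m) * f 1" if "d \<le> k - m" for d
    using that
  proof (induction d)
    case 0
    then show ?case using null_vec_k[OF K m] odd_k_minus_m[OF m(2)] by simp
  next
    case (Suc d)
    have "f (Suc (k - Suc d)) = - f (k - Suc d)"
      by (rule null_vec_alternates[OF K]) (use Suc.prems in auto)
    moreover have "Suc (k - Suc d) = k - d" "k - d - m = Suc (k - Suc d - m)"
      using Suc.prems by auto
    ultimately show ?case using Suc by simp
  qed
  from this[of "k - t"] show ?thesis using t by simp
qed

lemma null_vec_sum_alpha_seq:
  assumes K: "null_vec n k f" and m: "1 \<le> m"
  shows "(\<Sum>j\<in>{1..m-1}. alpha_seq (f 0) (f 1) j) = 0"
proof (cases "m \<le> k")
  case True
  have "even (k + 1 - m)" using odd_k_minus_m[OF True] True by (simp add: Suc_diff_le)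
  then obtain r where r: "k + 1 - m = 2 * r" by (rule evenE)
  have "{1..k} = {1..m-1} \<union> {m..<m + 2 * r}" using r m True by auto
  then have "(\<Sum>j\<in>{1..k}. f j) = (\<Sum>j\<in>{1..m-1}. f j) + (\<Sum>j\<in>{m..<m + 2 * r}. f j)"
    by (simp only:) (rule sum.union_disjoint, auto)
  also have "(\<Sum>j\<in>{1..m-1}. f j) = (\<Sum>j\<in>{1..m-1}. alpha_seq (f 0) (f 1) j)"
    by (intro sum.cong refl null_vec_head[OF K]) (use m in auto)
  also have "(\<Sum>j\<in>{m..<m + 2 * r}. f j) = (\<Sum>j\<in>{m..<m + 2 * r}. (-1) ^ (j - m) * f 1)"
    by (intro sum.cong refl null_vec_middle[OF K m True]) (use r in auto)
  also have "\<dots> = 0" by (rule sum_alternating)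
  finally show ?thesis using null_vec_sum[OF K] by simp
next
  case False
  then have "(\<Sum>j\<in>{1..m-1}. alpha_seq (f 0) (f 1) j) = (\<Sum>j\<in>{1..k}. f j)"
  proof (intro sum.cong)
    show "{1..m-1} = {1..k}" using False m_le by auto
  next
    fix j assume "j \<in> {1..k}"
    then show "alpha_seq (f 0) (f 1) j = f j" using null_vec_head[OF K, of j] False m_le by simp
  qed
  then show ?thesis using null_vec_sum[OF K] by simp
qed

lemma null_vec_edge:
  assumes K: "null_vec n k f" and e: "m = k + 1"
  shows "f (n - 1) = alpha_seq (f 0) (f 1) k - beta_seq (f 0) (f 1) k"
    and "beta_seq (f 0) (f 1) k + beta_seq (f 0) (f 1) 1 = f 0"
proof -
  have last: "f (k + k) + f (n - 1) = f k"
    using null_vec_diff[OF K, of "k + k"] n_eq e k_pos by (simp add: add_ac)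
  have next_last: "f k + f (Suc k) = f (n - 1) + f 0"
    using null_vec_diff[OF K, of k] n_eq e by (simp add: add_ac)
  have fk: "f k = alpha_seq (f 0) (f 1) k"
    using null_vec_head[OF K, of k] e by simp
  have fSk: "f (Suc k) = beta_seq (f 0) (f 1) 1"
    using null_vec_tail[OF K, of 1] e k_pos by simp
  have fkk: "f (k + k) = beta_seq (f 0) (f 1) k"
    using null_vec_tail[OF K, of k] e k_pos by simp
  have "f (n - 1) = f k - f (k + k)"
    using last by (simp add: eq_diff_eq add_ac)
  then show fn: "f (n - 1) = alpha_seq (f 0) (f 1) k - beta_seq (f 0) (f 1) k"
    unfolding fk fkk .
  have "f 0 = f k + f (Suc k) - f (n - 1)"
    using next_last by (simp add: eq_diff_eq add_ac)
  then show "beta_seq (f 0) (f 1) k + beta_seq (f 0) (f 1) 1 = f 0"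
    unfolding fn fk fSk by (simp add: algebra_simps)
qed

lemma null_vec_eq_0_if_01:
  assumes K: "null_vec n k f" and m: "1 \<le> m" and f01: "f 0 = 0" "f 1 = 0" and t: "t < n"
  shows "f t = 0"
proof -
  consider "t < m" | "m \<le> t" "t \<le> k" | "k < t" "t - k < m \<or> m \<le> k" | "t = n - 1" "m = k + 1"
    using t n_eq m_le by linarith
  then show ?thesis
  proof cases
    case 1
    then show ?thesis using null_vec_head[OF K, of t] f01 by simp
  next
    case 2
    then show ?thesis using null_vec_middle[OF K m] f01 by simp
  next
    case 3
    then have "f (k + (t - k)) = beta_seq (f 0) (f 1) (t - k)"
      by (intro null_vec_tail[OF K]) (use t n_eq m_le in auto)
    then show ?thesis using 3 f01 by simp
  next
    case 4
    then show ?thesis using null_vec_edge(1)[OF K] f01 by simp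
  qed
qed

lemma null_vec_01_eq_0:
  assumes K: "null_vec n k f" and m: "1 \<le> m" "m mod 3 \<noteq> 1"
  shows "f 0 = 0 \<and> f 1 = 0"
proof -
  have m_cases: "(m mod 3 = 0 \<and> (m - 1) mod 3 = 2) \<or> (m mod 3 = 2 \<and> (m - 1) mod 3 = 1)"
    using m mod_3_pred[OF m(1)] mod_3_cases[of m] by auto
  have sum: "(\<Sum>j\<in>{1..m-1}. alpha_seq (f 0) (f 1) j) = 0"
    by (rule null_vec_sum_alpha_seq[OF K m(1)])
  show ?thesis
  proof (cases "m \<le> k")
    case True
    have "alpha_seq (f 0) (f 1) m = f 1"
      using null_vec_head[OF K, of m] null_vec_middle[OF K m(1) True, of m] True by simp
    then show ?thesis using sum m_cases unfolding sum_alpha_seq by (auto simp: alpha_seq_def)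
  next
    case False
    then have "m = k + 1" using m_le by simp
    then show ?thesis
      using null_vec_edge(2)[OF K] sum m_cases unfolding sum_alpha_seq
      by (auto simp: alpha_seq_def beta_seq_def)
  qed
qed

lemma null_vec_eq_0_if_m_0:
  assumes K: "null_vec n k f" and m: "m = 0" and t: "t < n"
  shows "f t = 0"
proof -
  have alt: "f t = (-1) ^ t * f 0" if "t \<le> k" for t
    using that
  proof (induction t)
    case (Suc t)
    have "f t + f (Suc t) = 0" using null_vec_diff[OF K, of t] Suc.prems n_eq m by simp
    then show ?case using Suc by (simp add: eq_neg_iff_add_eq_0[symmetric] add.commute)
  qed simp
  have "odd k" using odd_k_plus_m m by simp
  then obtain r where r: "k = 2 * r + 1" by (rule oddE)
  then have "{1..k} = {1..<1 + 2 * r} \<union> {k}" by auto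
  then have "(\<Sum>j\<in>{1..k}. f j) = (\<Sum>j\<in>{1..<1 + 2 * r}. f j) + f k"
    using r by (simp add: sum.union_disjoint)
  also have "(\<Sum>j\<in>{1..<1 + 2 * r}. f j) = (\<Sum>j\<in>{1..<1 + 2 * r}. (-1) ^ (j - 1) * (- f 0))"
  proof (intro sum.cong refl)
    fix j assume j: "j \<in> {1..<1 + 2 * r}"
    then obtain j' where "j = Suc j'" by (cases j) auto
    then show "f j = (-1) ^ (j - 1) * (- f 0)" using alt[of j] j r by simp
  qed
  also have "\<dots> = 0" by (rule sum_alternating)
  also have "f k = - f 0" using alt[of k] \<open>odd k\<close> by simp
  finally have "f 0 = 0" using null_vec_sum[OF K] by simp
  then show ?thesis using alt[of t] t n_eq m by simp
qed

lemma null_vec_trivial: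
  assumes K: "null_vec n k f" and m: "m mod 3 \<noteq> 1" and t: "t < n"
  shows "f t = 0"
proof (cases "m = 0")
  case True
  then show ?thesis by (rule null_vec_eq_0_if_m_0[OF K _ t])
next
  case False
  then show ?thesis using null_vec_01_eq_0[OF K _ m] null_vec_eq_0_if_01[OF K _ _ _ t] by simp
qed

lemma null_sol_head: "t < m \<Longrightarrow> null_sol m k p q t = alpha_seq p q t"
  and null_sol_middle: "m \<le> t \<Longrightarrow> t \<le> k \<Longrightarrow> null_sol m k p q t = (-1) ^ (t - m) * q"
  and null_sol_tail: "k < t \<Longrightarrow> null_sol m k p q t = beta_seq p q (t - k)"
  using m_le by (simp_all add: null_sol_def)

lemma det_skewA_0_nonzero:
  assumes "m mod 3 \<noteq> 1"
  shows "det (skewA n k (0::'a::idom)) \<noteq> 0"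
proof (rule det_nonzero_if_kernel_trivial[OF skewA_carrier])
  fix v :: "'a vec" and i
  assume "v \<in> carrier_vec n" "skewA n k 0 *\<^sub>v v = 0\<^sub>v n" "i < n"
  then show "v $ i = 0" using null_vec_trivial[OF null_vec_mat_kernel assms] by blast
qed

end

section \<open>Splitting off the factor \<open>x\<^sup>2\<close>\<close>

definition diag_last_two :: "nat \<Rightarrow> 'a::comm_ring_1 \<Rightarrow> 'a mat" where
  "diag_last_two n x = mat n n (\<lambda>(i, j). if i = j then (if n - 2 \<le> i then x else 1) else 0)"

lemma det_diag_last_two:
  assumes "2 \<le> n"
  shows "det (diag_last_two n x) = x ^ 2"
proof -
  obtain n' where n: "n = Suc (Suc n')" using assms by (metis add_2_eq_Suc le_Suc_ex)
  have "det (diag_last_two n x) = (\<Prod>i<n. if n - 2 \<le> i then x else 1)"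
    by (subst det_upper_triangular_prod[of _ n]) (auto simp: diag_last_two_def upper_triangular_def)
  also have "\<dots> = (\<Prod>i<n'. if n' \<le> i then x else 1) * x * x"
    unfolding n by simp
  also have "(\<Prod>i<n'. if n' \<le> i then x else 1) = 1" by (rule prod.neutral) auto
  finally show ?thesis by (simp add: power2_eq_square)
qed

text \<open>The identity with its last two columns replaced by the null vectors of \<open>A(n,k,0)\<close> whose last
  two entries are \<open>(1,0)\<close> and \<open>(0,1)\<close>; it is upper unitriangular.\<close>

definition basis_mat :: "nat \<Rightarrow> nat \<Rightarrow> nat \<Rightarrow> 'a::comm_ring_1 mat" where
  "basis_mat n k m = mat n n (\<lambda>(i, j).
     if j = n - 2 then null_sol m k 1 (-1) i
     else if j = n - 1 then null_sol m k 1 0 i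
     else if i = j then 1 else 0)"

text \<open>On a null vector \<open>A(n,k,x)\<close> acts as \<open>x\<close> times its far part, so
  \<open>A(n,k,x) * basis_mat = reduced_mat x * diag_last_two x\<close>.\<close>

definition reduced_mat :: "nat \<Rightarrow> nat \<Rightarrow> nat \<Rightarrow> 'a::comm_ring_1 \<Rightarrow> 'a mat" where
  "reduced_mat n k m x = mat n n (\<lambda>(i, j).
     if j = n - 2 then far_apply n k (null_sol m k 1 (-1)) i
     else if j = n - 1 then far_apply n k (null_sol m k 1 0) i
     else skew_entry k x i j)"

lemma (in comm_ring_hom) map_reduced_mat: "map_mat hom (reduced_mat n k m x) = reduced_mat n k m (hom x)"
  unfolding reduced_mat_def
  by (rule eq_matI) (auto simp: hom_far_apply hom_null_sol hom_skew_entry hom_distribs)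

lemma reduced_mat_mult_diag_index:
  assumes "i < n" "j < n"
  shows "(reduced_mat n k m x * diag_last_two n x) $$ (i, j) =
    reduced_mat n k m x $$ (i, j) * (if n - 2 \<le> j then x else 1)"
proof -
  have "(reduced_mat n k m x * diag_last_two n x) $$ (i, j) =
      (\<Sum>l<n. reduced_mat n k m x $$ (i, l) * (if l = j then (if n - 2 \<le> j then x else 1) else 0))"
    using assms
    by (subst mult_mat_index_sum[of _ n]) (auto simp: reduced_mat_def diag_last_two_def intro!: sum.cong)
  then show ?thesis using assms by (simp add: sum_lessThan_delta_mult)
qed

lemma basis_mat_carrier [simp]: "basis_mat n k m \<in> carrier_mat n n"
  and reduced_mat_carrier [simp]: "reduced_mat n k m x \<in> carrier_mat n n"
  and diag_last_two_carrier [simp]: "diag_last_two n x \<in> carrier_mat n n"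
  by (simp_all add: basis_mat_def reduced_mat_def diag_last_two_def)

locale toeplitz_dims_singular = toeplitz_dims +
  assumes m_mod_3: "m mod 3 = 1"
begin

lemma m_pos: "1 \<le> m"
  using m_mod_3 by (cases m) auto

lemma m_minus_1_mod_3: "(m - 1) mod 3 = 0"
  using m_mod_3 mod_3_pred[OF m_pos] by simp

lemma last_two: "n - 2 < n - 1" "n - 1 < n"
  using n_eq k_pos m_pos by auto

lemma null_vec_eq_0_if_last:
  assumes K: "null_vec n k f" and f: "f (n - 2) = 0" "f (n - 1) = 0" and t: "t < n"
  shows "f t = 0"
proof -
  have last: "f (n - 1) = f 0 + f 1"
  proof (cases "m \<le> k")
    case True
    have "f (k + m) = beta_seq (f 0) (f 1) m"
      by (rule null_vec_tail[OF K]) (use m_pos True in auto)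
    then show ?thesis using n_eq m_mod_3 by (simp add: beta_seq_def)
  next
    case False
    then have "m = k + 1" using m_le by simp
    then show ?thesis
      using null_vec_edge(1)[OF K] m_minus_1_mod_3 by (simp add: alpha_seq_def beta_seq_def)
  qed
  have second_last: "f (n - 2) = - f 1"
  proof (cases "m = 1")
    case True
    then have "even k" using odd_k_plus_m by simp
    with k_pos have "odd (k - 1)" by (cases "k = 1") auto
    moreover have "f k = (-1) ^ (k - 1) * f 1"
      using null_vec_middle[OF K m_pos, of k] True k_pos by simp
    ultimately show ?thesis using True n_eq by simp
  next
    case False
    have "f (k + (m - 1)) = beta_seq (f 0) (f 1) (m - 1)"
      by (rule null_vec_tail[OF K]) (use False m_pos m_le in auto)
    moreover have "n - 2 = k + (m - 1)" using n_eq False m_pos by simp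
    ultimately show ?thesis using m_minus_1_mod_3 by (simp add: beta_seq_def)
  qed
  have "f 0 = 0" "f 1 = 0" using f last second_last by simp_all
  then show ?thesis using null_vec_eq_0_if_01[OF K m_pos _ _ t] by simp
qed

lemma null_sol_last: "null_sol m k p q (n - 1) = p + q" "null_sol m k p q (n - 2) = - q"
proof -
  show "null_sol m k p q (n - 1) = p + q"
    using n_eq m_pos m_mod_3 by (simp add: null_sol_tail beta_seq_def)
  show "null_sol m k p q (n - 2) = - q"
  proof (cases "m = 1")
    case True
    then have "null_sol m k p q (n - 2) = (-1) ^ (k - 1) * q"
      using n_eq k_pos null_sol_middle[of k p q] by simp
    moreover have "odd (k - 1)" using odd_k_minus_m k_pos True by simp
    ultimately show ?thesis by simp
  next
    case False
    then have "n - 2 = k + (m - 1)" "k < n - 2" using n_eq m_pos by auto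
    then show ?thesis using m_minus_1_mod_3 by (simp add: null_sol_tail beta_seq_def)
  qed
qed

lemma null_sol_diff_low:
  assumes i: "i < k"
  shows "null_sol m k p q i + null_sol m k p q (Suc i) =
    (if i + 1 + k < n then null_sol m k p q (i + 1 + k) else 0)"
proof -
  consider "Suc i < m" | "Suc i = m" | "m \<le> i"
    by linarith
  then show ?thesis
  proof cases
    case 1
    have "null_sol m k p q i + null_sol m k p q (Suc i) = alpha_seq p q i + alpha_seq p q (Suc i)"
      using 1 by (simp add: null_sol_head)
    also have "\<dots> = beta_seq p q (Suc i)" by (rule alpha_seq_add_Suc)
    also have "\<dots> = null_sol m k p q (i + 1 + k)" using 1 i by (simp add: null_sol_tail)
    finally show ?thesis using 1 n_eq by simp
  next
    case 2
    then have "i mod 3 = 0" using m_minus_1_mod_3 by auto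
    then show ?thesis
      using 2 i n_eq m_mod_3 by (simp add: null_sol_head null_sol_middle null_sol_tail alpha_seq_def beta_seq_def)
  next
    case 3
    then show ?thesis using i n_eq by (simp add: null_sol_middle Suc_diff_le)
  qed
qed

lemma null_sol_diff_high:
  assumes i: "k \<le> i" "Suc i < n"
  shows "null_sol m k p q i + null_sol m k p q (Suc i) =
    (if i + 1 + k < n then null_sol m k p q (i + 1 + k) else 0) + null_sol m k p q (i - k)"
proof -
  consider "i = k" "m \<le> k" | "i = k" "m = k + 1" | "k < i"
    using i m_le by linarith
  then show ?thesis
  proof cases
    case 1
    then show ?thesis using odd_k_minus_m n_eq m_pos
      by (simp add: null_sol_head null_sol_middle null_sol_tail alpha_seq_def beta_seq_def)
  next
    case 2
    then have "k mod 3 = 0" using m_minus_1_mod_3 by simp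
    then show ?thesis using 2 n_eq m_mod_3 by (simp add: null_sol_def alpha_seq_def beta_seq_def)
  next
    case 3
    have "null_sol m k p q i + null_sol m k p q (Suc i) = beta_seq p q (i - k) + beta_seq p q (Suc (i - k))"
      using 3 by (simp add: null_sol_tail Suc_diff_le)
    also have "\<dots> = alpha_seq p q (i - k)" by (rule beta_seq_add_Suc)
    also have "\<dots> = null_sol m k p q (i - k)" using 3 i n_eq by (simp add: null_sol_head)
    finally show ?thesis using 3 n_eq m_le by simp
  qed
qed

lemma null_sol_sum: "(\<Sum>j\<in>{1..k}. null_sol m k p q j) = 0"
proof (cases "m \<le> k")
  case True
  have "even (k + 1 - m)" using odd_k_minus_m[OF True] True by (simp add: Suc_diff_le)
  then obtain r where r: "k + 1 - m = 2 * r" by (rule evenE)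
  have "{1..k} = {1..m-1} \<union> {m..<m + 2 * r}" using r m_pos True by auto
  then have "(\<Sum>j\<in>{1..k}. null_sol m k p q j) =
      (\<Sum>j\<in>{1..m-1}. null_sol m k p q j) + (\<Sum>j\<in>{m..<m + 2 * r}. null_sol m k p q j)"
    by (simp only:) (rule sum.union_disjoint, auto)
  also have "(\<Sum>j\<in>{1..m-1}. null_sol m k p q j) = (\<Sum>j\<in>{1..m-1}. alpha_seq p q j)"
    by (intro sum.cong refl) (use m_pos in \<open>auto simp: null_sol_head\<close>)
  also have "\<dots> = 0" unfolding sum_alpha_seq using m_minus_1_mod_3 by simp
  also have "(\<Sum>j\<in>{m..<m + 2 * r}. null_sol m k p q j) = (\<Sum>j\<in>{m..<m + 2 * r}. (-1) ^ (j - m) * q)"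
    by (intro sum.cong refl) (use r True in \<open>auto simp: null_sol_middle\<close>)
  also have "\<dots> = 0" by (rule sum_alternating)
  finally show ?thesis by simp
next
  case False
  then have "m = k + 1" using m_le by simp
  then have "(\<Sum>j\<in>{1..k}. null_sol m k p q j) = (\<Sum>j\<in>{1..k}. alpha_seq p q j)"
    by (intro sum.cong refl) (auto simp: null_sol_def)
  also have "\<dots> = 0" using \<open>m = k + 1\<close> m_minus_1_mod_3 unfolding sum_alpha_seq by simp
  finally show ?thesis .
qed

lemma null_vec_null_sol: "null_vec n k (null_sol m k p q)"
  unfolding null_vec_iff[OF k_pos k_less_n]
proof (intro conjI allI impI)
  fix i assume "Suc i < n"
  then show "null_sol m k p q i + null_sol m k p q (Suc i) =
    (if i + 1 + k < n then null_sol m k p q (i + 1 + k) else 0)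
    + (if k \<le> i then null_sol m k p q (i - k) else 0)"
    using null_sol_diff_low[of i p q] null_sol_diff_high[of i p q] by (cases "k \<le> i") simp_all
qed (rule null_sol_sum)

lemma null_sol_far_pairing_term:
  assumes i: "i < n"
  shows "null_sol m k (1::int) (-1) i * far_apply n k (null_sol m k 1 0) i \<le> (if i = 0 then -1 else 0)"
proof -
  let ?K = "null_sol m k (1::int) 0"
  consider (head) "i < m" | (middle) "m \<le> i" "i \<le> k" | (tail) "k < i"
    using m_le by linarith
  then show ?thesis
  proof cases
    case head
    have "{i + k + 1..<n} = {Suc i + k..<Suc m + k}" using n_eq by auto
    then have "(\<Sum>j\<in>{i + k + 1..<n}. ?K j) = (\<Sum>j\<in>{Suc i + k..<Suc m + k}. ?K j)"
      by (simp only:)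
    also have "\<dots> = (\<Sum>s\<in>{Suc i..<Suc m}. ?K (s + k))"
      by (rule sum.shift_bounds_nat_ivl)
    also have "\<dots> = (\<Sum>s\<in>{Suc i..<Suc m}. of_bool (Suc s mod 3 = 2) - of_bool (s mod 3 = 2))"
      by (intro sum.cong refl) (auto simp: null_sol_tail beta_seq_1_0_diff)
    also have "\<dots> = of_bool (Suc m mod 3 = 2) - of_bool (Suc i mod 3 = 2)"
      using head by (intro sum_Suc_diff') simp
    finally have "far_apply n k ?K i = of_bool (Suc i mod 3 = 2) - 1"
      using far_apply_eq[OF i, of k ?K] head m_le m_mod_3 by (simp add: mod_Suc)
    then show ?thesis
      using head mod_3_cases[of i] by (auto simp: null_sol_head alpha_seq_def mod_Suc)
  next
    case middle
    then have "far_apply n k ?K i = 0" using far_apply_eq[OF i, of k ?K] n_eq by simp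
    then show ?thesis using middle m_pos by simp
  next
    case tail
    have "(\<Sum>j<i - k. ?K j) = (\<Sum>j<i - k. of_bool (Suc j mod 3 \<noteq> 0) - of_bool (j mod 3 \<noteq> 0))"
      by (intro sum.cong refl) (use tail i n_eq in \<open>auto simp: null_sol_head alpha_seq_1_0_diff\<close>)
    also have "\<dots> = of_bool ((i - k) mod 3 \<noteq> 0) - of_bool (0 mod 3 \<noteq> (0::nat))"
      by (rule sum_lessThan_telescope[where f = "\<lambda>j. of_bool (j mod 3 \<noteq> 0)"])
    finally have "far_apply n k ?K i = of_bool ((i - k) mod 3 \<noteq> 0)"
      using far_apply_eq[OF i, of k ?K] tail m_le n_eq by simp
    then show ?thesis
      using tail mod_3_cases[of "i - k"] by (auto simp: null_sol_tail beta_seq_def)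
  qed
qed

text \<open>The coefficient of \<open>x\<close> pairs the two null vectors nontrivially; this is what stops the
  multiplicity of the root \<open>0\<close> from exceeding the nullity.\<close>

lemma null_sol_far_pairing_neg:
  "(\<Sum>i<n. null_sol m k (1::int) (-1) i * far_apply n k (null_sol m k 1 0) i) < 0"
proof -
  have "(\<Sum>i<n. null_sol m k (1::int) (-1) i * far_apply n k (null_sol m k 1 0) i)
      \<le> (\<Sum>i<n. (if i = 0 then -1 else 0))"
    by (intro sum_mono null_sol_far_pairing_term) simp
  also have "\<dots> = -1" using n_eq by (simp add: sum.delta)
  finally show ?thesis by simp
qed

lemma det_basis_mat: "det (basis_mat n k m :: 'a::comm_ring_1 mat) = 1"
proof -
  have "upper_triangular (basis_mat n k m :: 'a mat)"
    unfolding upper_triangular_def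
  proof (intro allI impI)
    fix i j assume "i < dim_row (basis_mat n k m :: 'a mat)" "j < i"
    moreover have "j = n - 2 \<Longrightarrow> i < n \<Longrightarrow> j < i \<Longrightarrow> i = n - 1" by arith
    ultimately show "(basis_mat n k m :: 'a mat) $$ (i, j) = 0"
      using last_two null_sol_last(1)[of "1::'a" "-1"] by (auto simp: basis_mat_def)
  qed
  then have "det (basis_mat n k m :: 'a mat) = (\<Prod>i<n. basis_mat n k m $$ (i, i))"
    by (intro det_upper_triangular_prod) (simp add: basis_mat_def)
  also have "\<dots> = (\<Prod>i<n. 1)"
    using last_two null_sol_last[of "1::'a" 0] null_sol_last[of "1::'a" "-1"]
    by (intro prod.cong) (auto simp: basis_mat_def)
  finally show ?thesis by simp
qed

lemma skewA_mult_basis_mat: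
  "skewA n k x * basis_mat n k m = reduced_mat n k m x * diag_last_two n (x::'a::comm_ring_1)"
proof (rule eq_matI)
  fix i j
  assume "i < dim_row (reduced_mat n k m x * diag_last_two n x)"
    and "j < dim_col (reduced_mat n k m x * diag_last_two n x)"
  then have i: "i < n" and j: "j < n" by (auto simp: reduced_mat_def diag_last_two_def)
  have lhs: "(skewA n k x * basis_mat n k m) $$ (i, j) =
      (\<Sum>l<n. skew_entry k x i l * (basis_mat n k m :: 'a mat) $$ (l, j))"
    using i j by (subst mult_mat_index_sum[of _ n]) (auto simp: basis_mat_def intro!: sum.cong)
  have rhs: "(reduced_mat n k m x * diag_last_two n x) $$ (i, j) =
      reduced_mat n k m x $$ (i, j) * (if n - 2 \<le> j then x else 1)"
    by (rule reduced_mat_mult_diag_index[OF i j])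
  have null: "skew_apply n k x (null_sol m k p q) i = x * far_apply n k (null_sol m k p q) i" for p q
    by (rule skew_apply_null_vec[OF null_vec_null_sol i])
  consider "j = n - 2" | "j = n - 1" | "j < n - 2" using j by linarith
  then show "(skewA n k x * basis_mat n k m) $$ (i, j) = (reduced_mat n k m x * diag_last_two n x) $$ (i, j)"
  proof cases
    case 1
    then have "(skewA n k x * basis_mat n k m) $$ (i, j) = skew_apply n k x (null_sol m k 1 (-1)) i"
      unfolding lhs skew_apply_def using j by (intro sum.cong) (auto simp: basis_mat_def)
    then show ?thesis unfolding rhs using 1 i j last_two null by (simp add: reduced_mat_def)
  next
    case 2
    then have "(skewA n k x * basis_mat n k m) $$ (i, j) = skew_apply n k x (null_sol m k 1 0) i"
      unfolding lhs skew_apply_def using j last_two by (intro sum.cong) (auto simp: basis_mat_def)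
    then show ?thesis unfolding rhs using 2 i j last_two null by (simp add: reduced_mat_def)
  next
    case 3
    then have "(skewA n k x * basis_mat n k m) $$ (i, j) = (\<Sum>l<n. skew_entry k x i l * (if l = j then 1 else 0))"
      unfolding lhs using j by (intro sum.cong) (auto simp: basis_mat_def)
    then show ?thesis
      unfolding rhs using 3 i j last_two by (simp add: sum_lessThan_delta_mult reduced_mat_def)
  qed
qed (simp_all add: skewA_eq reduced_mat_def diag_last_two_def basis_mat_def)

lemma D_eq_det_reduced_mat: "D n k = det (reduced_mat n k m [:0, 1:]) * [:0, 1:] ^ 2"
proof -
  let ?X = "[:0, 1:] :: int poly"
  have "D n k = det (skewA n k ?X * basis_mat n k m)"
    by (simp add: D_def det_mult[of _ n] det_basis_mat)
  also have "\<dots> = det (reduced_mat n k m ?X * diag_last_two n ?X)"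
    by (simp only: skewA_mult_basis_mat)
  also have "\<dots> = det (reduced_mat n k m ?X) * ?X ^ 2"
    using last_two by (simp add: det_mult[of _ n] det_diag_last_two)
  finally show ?thesis .
qed

lemma reduced_mat_0_mult_vec:
  assumes v: "v \<in> carrier_vec n" and i: "i < n"
  shows "(reduced_mat n k m 0 *\<^sub>v v) $ i =
    skew_apply n k 0 (\<lambda>t. if t < n - 2 then v $ t else 0) i
    + v $ (n - 2) * far_apply n k (null_sol m k 1 (-1)) i
    + v $ (n - 1) * far_apply n k (null_sol m k 1 0) i"
proof -
  have "(reduced_mat n k m 0 *\<^sub>v v) $ i = (\<Sum>l<n. reduced_mat n k m 0 $$ (i, l) * v $ l)"
    using v i by (simp add: reduced_mat_def scalar_prod_def lessThan_atLeast0)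
  also have "\<dots> = (\<Sum>l<n. skew_entry k 0 i l * (if l < n - 2 then v $ l else 0)
      + (if l = n - 2 then v $ (n - 2) * far_apply n k (null_sol m k 1 (-1)) i else 0)
      + (if l = n - 1 then v $ (n - 1) * far_apply n k (null_sol m k 1 0) i else 0))"
  proof (intro sum.cong refl)
    fix l assume l: "l \<in> {..<n}"
    then consider "l = n - 2" | "l = n - 1" | "l < n - 2" by force
    then show "reduced_mat n k m 0 $$ (i, l) * v $ l =
      skew_entry k 0 i l * (if l < n - 2 then v $ l else 0)
      + (if l = n - 2 then v $ (n - 2) * far_apply n k (null_sol m k 1 (-1)) i else 0)
      + (if l = n - 1 then v $ (n - 1) * far_apply n k (null_sol m k 1 0) i else 0)"
      by cases (use i l last_two in \<open>auto simp: reduced_mat_def\<close>)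
  qed
  also have "\<dots> = skew_apply n k 0 (\<lambda>t. if t < n - 2 then v $ t else 0) i
    + v $ (n - 2) * far_apply n k (null_sol m k 1 (-1)) i
    + v $ (n - 1) * far_apply n k (null_sol m k 1 0) i"
    unfolding skew_apply_def sum.distrib using last_two by (simp add: sum.delta)
  finally show ?thesis .
qed

text \<open>Pairing a kernel vector \<open>(w, a, b)\<close> of \<open>reduced_mat 0\<close> with both null vectors kills the
  \<open>w\<close>-part by skew-symmetry and leaves \<open>b c = 0\<close> and \<open>a c = 0\<close>, where \<open>c < 0\<close> is the
  pairing of the two null vectors through the far part.\<close>

lemma det_reduced_mat_0: "det (reduced_mat n k m (0::int)) \<noteq> 0"
proof (rule det_nonzero_if_kernel_trivial)
  show "reduced_mat n k m (0::int) \<in> carrier_mat n n" by simp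
next
  fix v :: "int vec" and t
  assume v: "v \<in> carrier_vec n" "reduced_mat n k m 0 *\<^sub>v v = 0\<^sub>v n" and t: "t < n"
  define w where "w = (\<lambda>t. if t < n - 2 then v $ t else 0)"
  define a b where "a = v $ (n - 2)" and "b = v $ (n - 1)"
  let ?K1 = "null_sol m k (1::int) (-1)" and ?K2 = "null_sol m k (1::int) 0"
  let ?c = "\<Sum>i<n. ?K1 i * far_apply n k ?K2 i"
  have c: "?c \<noteq> 0" by (rule less_imp_neq[OF null_sol_far_pairing_neg])
  have row: "skew_apply n k 0 w i + a * far_apply n k ?K1 i + b * far_apply n k ?K2 i = 0"
    if "i < n" for i
    using reduced_mat_0_mult_vec[OF v(1) that] v(2) that unfolding w_def a_def b_def by simp
  have pair: "(\<Sum>i<n. f i * skew_apply n k 0 w i) + a * (\<Sum>i<n. f i * far_apply n k ?K1 i)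
      + b * (\<Sum>i<n. f i * far_apply n k ?K2 i) = 0" for f
  proof -
    have "(\<Sum>i<n. f i * (skew_apply n k 0 w i + a * far_apply n k ?K1 i + b * far_apply n k ?K2 i)) = 0"
      using row by simp
    then show ?thesis by (simp add: sum.distrib sum_distrib_left algebra_simps)
  qed
  have K1: "(\<Sum>i<n. ?K1 i * skew_apply n k 0 w i) = 0"
    and K2: "(\<Sum>i<n. ?K2 i * skew_apply n k 0 w i) = 0"
    by (rule null_vec_pairing[OF null_vec_null_sol])+
  have "b * ?c = 0"
    using pair[of ?K1] K1 far_apply_self[of ?K1 n k] by simp
  then have b: "b = 0" using c by simp
  have "a * ?c = 0"
    using pair[of ?K2] K2 far_apply_antisym[of ?K2 n k ?K1] b by simp
  then have a: "a = 0" using c by simp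
  have "null_vec n k w" unfolding null_vec_def using row a b by simp
  then have "w t = 0"
    by (rule null_vec_eq_0_if_last[OF _ _ _ t]) (use last_two in \<open>simp_all add: w_def\<close>)
  moreover have "t < n - 2 \<or> t = n - 2 \<or> t = n - 1" using t by arith
  ultimately show "v $ t = 0" using a b unfolding w_def a_def b_def by auto
qed

lemma poly_det_reduced_mat_0: "poly (det (reduced_mat n k m [:0, 1::int:])) 0 \<noteq> 0"
  using det_reduced_mat_0
  unfolding poly_eval.hom_det[symmetric] poly_eval.map_reduced_mat by simp

lemma skewA_0_mult_basis_mat:
  "skewA n k 0 * basis_mat n k m =
    mat n n (\<lambda>(i, j). if j < n - 2 then skew_entry k 0 i j else (0::'a::comm_ring_1))"
proof (rule eq_matI)
  fix i j
  assume "i < dim_row (mat n n (\<lambda>(i, j). if j < n - 2 then skew_entry k 0 i j else (0::'a)))"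
    and "j < dim_col (mat n n (\<lambda>(i, j). if j < n - 2 then skew_entry k 0 i j else (0::'a)))"
  then have i: "i < n" and j: "j < n" by auto
  have "(skewA n k 0 * basis_mat n k m) $$ (i, j) = reduced_mat n k m 0 $$ (i, j) * (if n - 2 \<le> j then 0 else 1)"
    unfolding skewA_mult_basis_mat by (rule reduced_mat_mult_diag_index[OF i j])
  also have "\<dots> = (if j < n - 2 then skew_entry k 0 i j else 0)"
    using i j last_two by (simp add: reduced_mat_def)
  finally show "(skewA n k 0 * basis_mat n k m) $$ (i, j) =
      mat n n (\<lambda>(i, j). if j < n - 2 then skew_entry k 0 i j else (0::'a)) $$ (i, j)"
    using i j by simp
qed (simp_all add: skewA_eq basis_mat_def)

lemma basis_mat_col_sum:
  assumes i: "i < n" and j: "j < n"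
  shows "(\<Sum>l<n. basis_mat n k m $$ (l, i) * skew_entry k 0 l j) =
    (if i < n - 2 then skew_entry k 0 i j else (0::'a::comm_ring_1))"
proof -
  consider "i < n - 2" | "i = n - 2" | "i = n - 1" using i by linarith
  then show ?thesis
  proof cases
    case 1
    have "(\<Sum>l<n. basis_mat n k m $$ (l, i) * skew_entry k 0 l j) =
        (\<Sum>l<n. skew_entry k 0 l j * (if l = i then 1 else (0::'a)))"
      using 1 last_two by (intro sum.cong refl) (auto simp: basis_mat_def)
    then show ?thesis using 1 i by (simp add: sum_lessThan_delta_mult)
  next
    case 2
    then have "(\<Sum>l<n. basis_mat n k m $$ (l, i) * skew_entry k 0 l j) =
        (\<Sum>l<n. null_sol m k 1 (-1) l * skew_entry k 0 l j)"
      by (intro sum.cong refl) (auto simp: basis_mat_def)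
    also have "\<dots> = 0" by (rule null_vec_col_sum[OF null_vec_null_sol j])
    finally show ?thesis using 2 by simp
  next
    case 3
    then have "(\<Sum>l<n. basis_mat n k m $$ (l, i) * skew_entry k 0 l j) =
        (\<Sum>l<n. null_sol m k 1 0 l * skew_entry k 0 l j)"
      using last_two by (intro sum.cong refl) (auto simp: basis_mat_def)
    also have "\<dots> = 0" by (rule null_vec_col_sum[OF null_vec_null_sol j])
    finally show ?thesis using 3 last_two by simp
  qed
qed

lemma basis_mat_congruence:
  "transpose_mat (basis_mat n k m) * (skewA n k 0 * basis_mat n k m) =
    four_block_mat (skewA (n - 2) k (0::'a::comm_ring_1)) (0\<^sub>m (n - 2) 2) (0\<^sub>m 2 (n - 2)) (0\<^sub>m 2 2)"
  (is "?P' * ?AP = ?B")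
proof (rule eq_matI)
  fix i j assume "i < dim_row ?B" "j < dim_col ?B"
  then have i: "i < n" and j: "j < n" using last_two by (auto simp: skewA_eq)
  have "(?P' * ?AP) $$ (i, j) = (\<Sum>l<n. basis_mat n k m $$ (l, i) * ?AP $$ (l, j))"
    using i j mult_carrier_mat[OF skewA_carrier basis_mat_carrier]
    by (subst mult_mat_index_sum[of _ n]) (auto simp: carrier_matD[OF basis_mat_carrier])
  also have "\<dots> = (\<Sum>l<n. basis_mat n k m $$ (l, i) * (if j < n - 2 then skew_entry k 0 l j else 0))"
    by (intro sum.cong refl) (use j in \<open>simp add: skewA_0_mult_basis_mat\<close>)
  also have "\<dots> = (if i < n - 2 \<and> j < n - 2 then skew_entry k 0 i j else 0)"
    by (cases "j < n - 2") (simp_all add: basis_mat_col_sum[OF i j])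
  also have "\<dots> = ?B $$ (i, j)"
    using i j last_two by (subst index_mat_four_block) (auto simp: skewA_eq)
  finally show "(?P' * ?AP) $$ (i, j) = ?B $$ (i, j)" .
qed (use last_two in \<open>auto simp: skewA_eq carrier_matD[OF basis_mat_carrier]\<close>)

lemma det_skewA_n_minus_2: "det (skewA (n - 2) k (0::'a::idom)) \<noteq> 0"
proof (rule det_nonzero_if_kernel_trivial[OF skewA_carrier])
  fix v :: "'a vec" and t
  assume v: "v \<in> carrier_vec (n - 2)" "skewA (n - 2) k 0 *\<^sub>v v = 0\<^sub>v (n - 2)" and t: "t < n - 2"
  define w where "w = (\<lambda>t. if t < n - 2 then v $ t else 0)"
  have low: "skew_apply n k 0 w i = 0" if i: "i < n - 2" for i
  proof -
    have "skew_apply n k 0 w i = skew_apply (n - 2) k 0 (($) v) i"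
      unfolding skew_apply_def by (rule sum.mono_neutral_cong_right) (auto simp: w_def)
    also have "\<dots> = 0" using skewA_mult_vec[OF v(1) i, of k 0] v(2) i by simp
    finally show ?thesis .
  qed
  have top: "f (n - 2) * skew_apply n k 0 w (n - 2) + f (n - 1) * skew_apply n k 0 w (n - 1) = 0"
    if "null_vec n k f" for f :: "nat \<Rightarrow> 'a"
  proof -
    have "(\<Sum>i<n. f i * skew_apply n k 0 w i) = (\<Sum>i<n - 2. f i * skew_apply n k 0 w i)
        + f (n - 2) * skew_apply n k 0 w (n - 2) + f (n - 1) * skew_apply n k 0 w (n - 1)"
      by (rule sum_lessThan_last_two) (use last_two in arith)
    then show ?thesis using null_vec_pairing[OF that, of w] low by simp
  qed
  have second_last: "skew_apply n k 0 w (n - 2) = 0"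
    using null_sol_last[of "1::'a" "-1"] top[OF null_vec_null_sol, of 1 "-1"] by simp
  have last: "skew_apply n k 0 w (n - 1) = 0"
    using null_sol_last[of "1::'a" 0] top[OF null_vec_null_sol, of 1 0] by simp
  have "null_vec n k w"
    unfolding null_vec_def
  proof (intro allI impI)
    fix i assume "i < n"
    then consider "i < n - 2" | "i = n - 2" | "i = n - 1" by linarith
    then show "skew_apply n k 0 w i = 0" by cases (use low second_last last in auto)
  qed
  then have "w t = 0"
    by (rule null_vec_eq_0_if_last) (use last_two t in \<open>simp_all add: w_def\<close>)
  then show "v $ t = 0" using t by (simp add: w_def)
qed

lemma nullity_eq_2: "N n k = 2"
proof -
  let ?A = "skewA n k (0::rat)" and ?P = "basis_mat n k m :: rat mat"
  have "N n k = kernel.dim n ?A" by (simp add: N_def kernel_dim_def skewA_eq)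
  also have "\<dots> = kernel.dim n (transpose_mat ?P * (?A * ?P))"
    by (rule kernel_dim_congruence[symmetric]) (simp_all add: det_basis_mat)
  also have "\<dots> = kernel.dim (n - 2 + 2)
      (four_block_mat (skewA (n - 2) k (0::rat)) (0\<^sub>m (n - 2) 2) (0\<^sub>m 2 (n - 2)) (0\<^sub>m 2 2))"
    using last_two by (simp only: basis_mat_congruence le_add_diff_inverse2 less_imp_le_nat)
  also have "\<dots> = kernel.dim (n - 2) (skewA (n - 2) k (0::rat)) + kernel.dim 2 (0\<^sub>m 2 2 :: rat mat)"
    by (rule kernel_four_block_0_mat) auto
  also have "\<dots> = 2"
    using kernel_dim_eq_0_if_det_nonzero[OF skewA_carrier det_skewA_n_minus_2[where 'a = rat]] kernel_dim_zero_mat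
    by simp
  finally show ?thesis .
qed

end

lemma (in toeplitz_dims) D_factorization:
  obtains q d where "D n k = q * [:0, 1:] ^ d" and "poly q 0 \<noteq> 0" and "N n k = d"
proof (cases "m mod 3 = 1")
  case True
  then interpret toeplitz_dims_singular n k m
    by (intro toeplitz_dims_singular.intro toeplitz_dims_axioms toeplitz_dims_singular_axioms.intro)
  show ?thesis by (rule that[OF D_eq_det_reduced_mat poly_det_reduced_mat_0 nullity_eq_2])
next
  case False
  have "poly (D n k) 0 \<noteq> 0" using det_skewA_0_nonzero[OF False] by (simp add: poly_D_0)
  moreover have "N n k = 0"
    using kernel_dim_eq_0_if_det_nonzero[OF skewA_carrier det_skewA_0_nonzero[OF False]]
    by (simp add: N_def kernel_dim_def skewA_eq)
  ultimately show ?thesis using that[of "D n k" 0] by simp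
qed

theorem theorem9p2:
  fixes \<nu> k :: nat
  assumes "\<nu> \<ge> 2" and "\<nu> - 1 \<le> k" and "k \<le> 2 * \<nu> - 1"
  shows "D (2 * \<nu>) k \<noteq> 0 \<and> order 0 (D (2 * \<nu>) k) = N (2 * \<nu>) k"
proof -
  have "k + (2 * \<nu> - 1 - k) = 2 * (\<nu> - 1) + 1" using assms by simp
  then interpret toeplitz_dims "2 * \<nu>" k "2 * \<nu> - 1 - k"
    by unfold_locales (use assms in auto)
  obtain q d where "D (2 * \<nu>) k = q * [:0, 1:] ^ d" "poly q 0 \<noteq> 0" "N (2 * \<nu>) k = d"
    by (rule D_factorization)
  then show ?thesis using order_0_mult_X_power by simp
qed

end
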